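(* Let $T,Z$ be random variables on finite sets with joint distribution $P_{TZ}=P_U$ on $\mathcal U=\mathcal T\times\mathcal Z$, let $W(y|x)$ be a channel from a finite set $\mathcal X$ to a finite set $\mathcal Y$, and $Q$ a distribution on $\mathcal X$. Let \[ E=\min_{\hat P_U}\min_{\hat P_{XY}} D(\hat P_U\|P_U)+D(\hat P_{XY}\|QW)+\Big[\min_{\tilde P_U\in\mathcal K_s(\hat P_U)}\min_{\tilde P_{XY}\in\mathcal K_c(\hat P_{XY})} D(\tilde P_{XY}\|Q\hat P_Y)-H(\tilde P_{T|Z})\Big]^+, \] where $\mathcal K_s(\hat P_U)=\{\tilde P_U:\tilde P_Z=\hat P_Z,\ \mathbb E_{\tilde P}\log P_U(U)\ge \mathbb E_{\hat P}\log P_U(U)\}$ and $\mathcal K_c(\hat P_{XY})=\{\tilde P_{XY}:\tilde P_Y=\hat P_Y,\ \mathbb E_{\tilde P}\log W(Y|X)\ge\mathbb E_{\hat P}\log W(Y|X)\}$. Then \[ E\ge \min_{\hat P_U}\min_{\hat P_{XY}} D(\hat P_U\|P_U)+D(\hat P_{XY}\|QW)+\Big[D(\hat P_{XY}\|Q\hat P_Y)-H(\hat P_{T|Z})\Big]^+. \]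
   Context: Minimizations over $\hat P_U$, $\tilde P_U$ range over distributions on $\mathcal U$ and over $\hat P_{XY},\tilde P_{XY}$ over distributions on $\mathcal X\times\mathcal Y$. $[x]^+=\max\{0,x\}$; $QW$ denotes $Q(x)W(y|x)$; $Q\hat P_Y$ denotes $Q(x)\hat P_Y(y)$ with $\hat P_Y$ the $Y$-marginal of $\hat P_{XY}$; $\hat P_Z$ is the $Z$-marginal; $H(\tilde P_{T|Z})$ is the conditional entropy of $T$ given $Z$ under $\tilde P_U$. *)

theory Defs
  imports "HOL-Analysis.Analysis"
begin

definition is_dist :: "('a::finite \<Rightarrow> real) \<Rightarrow> bool" where
  "is_dist P \<longleftrightarrow> (\<forall>a. 0 \<le> P a) \<and> (\<Sum>a\<in>UNIV. P a) = 1"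

definition KL :: "('a::finite \<Rightarrow> real) \<Rightarrow> ('a \<Rightarrow> real) \<Rightarrow> ereal" where
  "KL P R = (if \<exists>a. P a > 0 \<and> R a = 0 then \<infinity>
             else ereal (\<Sum>a\<in>UNIV. if P a = 0 then 0 else P a * ln (P a / R a)))"

definition Elog :: "('a::finite \<Rightarrow> real) \<Rightarrow> ('a \<Rightarrow> real) \<Rightarrow> ereal" where
  "Elog P f = (if \<exists>a. P a > 0 \<and> f a = 0 then -\<infinity>
               else ereal (\<Sum>a\<in>UNIV. if P a = 0 then 0 else P a * ln (f a)))"

definition margZ :: "('t::finite \<times> 'z \<Rightarrow> real) \<Rightarrow> 'z \<Rightarrow> real" where
  "margZ P z = (\<Sum>t\<in>UNIV. P (t, z))"

definition margY :: "('x::finite \<times> 'y \<Rightarrow> real) \<Rightarrow> 'y \<Rightarrow> real" where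
  "margY P y = (\<Sum>x\<in>UNIV. P (x, y))"

definition condH :: "('t::finite \<times> 'z::finite \<Rightarrow> real) \<Rightarrow> real" where
  "condH P = (\<Sum>u\<in>UNIV. if P u = 0 then 0 else - P u * ln (P u / margZ P (snd u)))"

definition joint :: "('x \<Rightarrow> real) \<Rightarrow> ('x \<Rightarrow> 'y \<Rightarrow> real) \<Rightarrow> 'x \<times> 'y \<Rightarrow> real" where
  "joint Q W u = Q (fst u) * W (fst u) (snd u)"

definition prodY :: "('x::finite \<Rightarrow> real) \<Rightarrow> ('x \<times> 'y \<Rightarrow> real) \<Rightarrow> 'x \<times> 'y \<Rightarrow> real" where
  "prodY Q P u = Q (fst u) * margY P (snd u)"

definition Ks :: "('t::finite \<times> 'z::finite \<Rightarrow> real) \<Rightarrow> ('t \<times> 'z \<Rightarrow> real) \<Rightarrow> ('t \<times> 'z \<Rightarrow> real) set" where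
  "Ks PU Ph = {Pt. is_dist Pt \<and> margZ Pt = margZ Ph \<and> Elog Pt PU \<ge> Elog Ph PU}"

definition Kc :: "('x::finite \<Rightarrow> 'y::finite \<Rightarrow> real) \<Rightarrow> ('x \<times> 'y \<Rightarrow> real) \<Rightarrow> ('x \<times> 'y \<Rightarrow> real) set" where
  "Kc W Ph = {Pt. is_dist Pt \<and> margY Pt = margY Ph
                  \<and> Elog Pt (\<lambda>u. W (fst u) (snd u)) \<ge> Elog Ph (\<lambda>u. W (fst u) (snd u))}"

definition pos_part :: "ereal \<Rightarrow> ereal" where
  "pos_part x = max 0 x"

end

theory Submission imports Defs begin

(*
  Two identities drive the proof. For a joint law P of (T,Z),
    D(P || P_U) + H(T|Z) = -H(P_Z) - E_P log P_U,
  so replacing P^_U by any P~_U in K_s(P^_U) (same Z-marginal, larger E log P_U) can only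
  decrease D(. || P_U) + H(T|Z). For a joint law P of (X,Y),
    D(P || QW) = D(P || Q P_Y) - H(P_Y) - E_P log W,
  so replacing P^_XY by any P~_XY in K_c(P^_XY) can only decrease D(. || QW) - D(. || Q P^_Y).
  Hence either the bracket at (P^_U, P^_XY) is no larger than at (P~_U, P~_XY), or the pair
  (P~_U, P~_XY) has no larger outer divergences and, sharing the Y-marginal of P^_XY, the
  same bracket. Either way the right-hand objective at one of the two pairs is at most
  D(P^_U || P_U) + D(P^_XY || QW) + [D(P~_XY || Q P^_Y) - H(P~_T|Z)]^+.
*)

lemma is_dist_nonneg: "is_dist P \<Longrightarrow> 0 \<le> P a"
  unfolding is_dist_def by blast

lemma le_margZ: "(\<And>u. 0 \<le> P u) \<Longrightarrow> P (t, z) \<le> margZ P z"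
  unfolding margZ_def by (intro member_le_sum) auto

lemma le_margY: "(\<And>u. 0 \<le> P u) \<Longrightarrow> P (x, y) \<le> margY P y"
  unfolding margY_def by (intro member_le_sum) auto

lemma sum_snd_margZ:
  fixes P :: "'t::finite \<times> 'z::finite \<Rightarrow> real"
  shows "(\<Sum>u\<in>UNIV. P u * g (snd u)) = (\<Sum>z\<in>UNIV. margZ P z * g z)"
  unfolding margZ_def sum_distrib_right
  by (subst sum.swap) (simp add: sum.cartesian_product case_prod_beta flip: UNIV_Times_UNIV)

lemma sum_snd_margY:
  fixes P :: "'x::finite \<times> 'y::finite \<Rightarrow> real"
  shows "(\<Sum>u\<in>UNIV. P u * g (snd u)) = (\<Sum>y\<in>UNIV. margY P y * g y)"
  unfolding margY_def sum_distrib_right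
  by (subst sum.swap) (simp add: sum.cartesian_product case_prod_beta flip: UNIV_Times_UNIV)

lemma KL_neq_minfty: "KL P R \<noteq> -\<infinity>"
  unfolding KL_def by auto

lemma KL_eq_infty: "0 < P a \<Longrightarrow> R a = 0 \<Longrightarrow> KL P R = \<infinity>"
  unfolding KL_def by auto

lemma KL_eq_sum:
  "(\<And>a. 0 < P a \<Longrightarrow> R a \<noteq> 0) \<Longrightarrow> KL P R = ereal (\<Sum>a\<in>UNIV. P a * ln (P a / R a))"
  unfolding KL_def by (auto intro!: sum.cong)

lemma Elog_neq_infty: "Elog P f \<noteq> \<infinity>"
  unfolding Elog_def by auto

lemma Elog_eq_minfty: "0 < P a \<Longrightarrow> f a = 0 \<Longrightarrow> Elog P f = -\<infinity>"
  unfolding Elog_def by auto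

lemma Elog_eq_sum:
  "(\<And>a. 0 < P a \<Longrightarrow> f a \<noteq> 0) \<Longrightarrow> Elog P f = ereal (\<Sum>a\<in>UNIV. P a * ln (f a))"
  unfolding Elog_def by (auto intro!: sum.cong)

lemma condH_eq_sum: "condH P = - (\<Sum>u\<in>UNIV. P u * ln (P u / margZ P (snd u)))"
  unfolding condH_def by (auto simp flip: sum_negf intro!: sum.cong)

lemma KL_plus_condH_eq:
  fixes P PU :: "'t::finite \<times> 'z::finite \<Rightarrow> real"
  assumes P: "\<And>u. 0 \<le> P u" and PU: "\<And>u. 0 \<le> PU u"
  shows "KL P PU + ereal (condH P) = ereal (\<Sum>z\<in>UNIV. margZ P z * ln (margZ P z)) - Elog P PU"
proof (cases "\<exists>u. 0 < P u \<and> PU u = 0")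
  case True
  then show ?thesis by (auto simp: KL_eq_infty Elog_eq_minfty)
next
  case False
  have "PU u \<noteq> 0" if "0 < P u" for u
    using False that by blast
  then have pos: "0 < PU u" "0 < margZ P (snd u)" if "0 < P u" for u
    using PU[of u] le_margZ[of P "fst u" "snd u", OF P] that by (auto simp: le_less)
  have "P u * ln (P u / PU u) - P u * ln (P u / margZ P (snd u))
      = P u * ln (margZ P (snd u)) - P u * ln (PU u)" for u
    using P[of u] pos[of u] by (cases "P u = 0") (simp_all add: ln_div algebra_simps)
  then have "(\<Sum>u\<in>UNIV. P u * ln (P u / PU u)) + condH P
      = (\<Sum>z\<in>UNIV. margZ P z * ln (margZ P z)) - (\<Sum>u\<in>UNIV. P u * ln (PU u))"
    by (simp add: condH_eq_sum sum_snd_margZ[of P "\<lambda>z. ln (margZ P z)", symmetric] sum_subtractf[symmetric])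
  moreover have "KL P PU = ereal (\<Sum>u\<in>UNIV. P u * ln (P u / PU u))"
    by (intro KL_eq_sum) (auto dest!: pos(1))
  moreover have "Elog P PU = ereal (\<Sum>u\<in>UNIV. P u * ln (PU u))"
    by (intro Elog_eq_sum) (auto dest!: pos(1))
  ultimately show ?thesis by simp
qed

lemma KL_joint_eq:
  fixes P :: "'x::finite \<times> 'y::finite \<Rightarrow> real"
  assumes P: "\<And>u. 0 \<le> P u" and Q: "\<And>x. 0 \<le> Q x" and W: "\<And>x y. 0 \<le> W x y"
  shows "KL P (joint Q W) = KL P (prodY Q P)
           + ereal (\<Sum>y\<in>UNIV. margY P y * ln (margY P y)) - Elog P (\<lambda>u. W (fst u) (snd u))"
proof -
  consider (Q0) u where "0 < P u" "Q (fst u) = 0"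
    | (W0) u where "0 < P u" "W (fst u) (snd u) = 0"
    | (pos) "\<And>u. 0 < P u \<Longrightarrow> 0 < Q (fst u) \<and> 0 < W (fst u) (snd u)"
    using Q W by (metis less_eq_real_def)
  then show ?thesis
  proof cases
    case Q0
    then show ?thesis
      by (simp add: KL_eq_infty[of P u] joint_def prodY_def Elog_neq_infty)
  next
    case W0
    then show ?thesis
      by (simp add: KL_eq_infty[of P u] Elog_eq_minfty[of P u] joint_def KL_neq_minfty)
  next
    case pos
    have M: "0 < margY P (snd u)" if "0 < P u" for u
      using le_margY[of P "fst u" "snd u", OF P] that by simp
    have "P u * ln (P u / joint Q W u)
        = P u * ln (P u / prodY Q P u) + P u * ln (margY P (snd u)) - P u * ln (W (fst u) (snd u))" for u
      using P[of u] pos[of u] M[of u]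
      by (cases "P u = 0") (simp_all add: joint_def prodY_def ln_div ln_mult algebra_simps)
    then have "(\<Sum>u\<in>UNIV. P u * ln (P u / joint Q W u))
        = (\<Sum>u\<in>UNIV. P u * ln (P u / prodY Q P u))
          + (\<Sum>y\<in>UNIV. margY P y * ln (margY P y)) - (\<Sum>u\<in>UNIV. P u * ln (W (fst u) (snd u)))"
      by (simp add: sum.distrib sum_subtractf sum_snd_margY[of P "\<lambda>y. ln (margY P y)"])
    moreover have "KL P (joint Q W) = ereal (\<Sum>u\<in>UNIV. P u * ln (P u / joint Q W u))"
      by (intro KL_eq_sum) (auto simp: joint_def dest!: pos)
    moreover have "KL P (prodY Q P) = ereal (\<Sum>u\<in>UNIV. P u * ln (P u / prodY Q P u))"
      by (intro KL_eq_sum) (auto simp: prodY_def dest: pos M)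
    moreover have "Elog P (\<lambda>u. W (fst u) (snd u)) = ereal (\<Sum>u\<in>UNIV. P u * ln (W (fst u) (snd u)))"
      by (intro Elog_eq_sum) (auto dest!: pos)
    ultimately show ?thesis by simp
  qed
qed

lemma Ks_KL_plus_condH_le:
  assumes "is_dist PU" and "is_dist Ph" and "Pt \<in> Ks PU Ph"
  shows "KL Pt PU + ereal (condH Pt) \<le> KL Ph PU + ereal (condH Ph)"
proof -
  from assms(3) have "is_dist Pt" and margZ: "margZ Pt = margZ Ph" and "Elog Ph PU \<le> Elog Pt PU"
    unfolding Ks_def by auto
  with assms(1,2) show ?thesis
    by (simp add: KL_plus_condH_eq is_dist_nonneg margZ ereal_minus_mono)
qed

lemma Kc_KL_joint_le:
  assumes "is_dist Q" and "\<forall>x. is_dist (W x)" and "is_dist Pxy" and "Ptxy \<in> Kc W Pxy"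
  shows "KL Ptxy (joint Q W) + KL Pxy (prodY Q Pxy) \<le> KL Pxy (joint Q W) + KL Ptxy (prodY Q Pxy)"
proof -
  let ?w = "\<lambda>u. W (fst u) (snd u)"
  let ?H = "ereal (\<Sum>y\<in>UNIV. margY Pxy y * ln (margY Pxy y))"
  let ?K = "KL Ptxy (prodY Q Pxy) + KL Pxy (prodY Q Pxy) + ?H"
  from assms(4) have "is_dist Ptxy" and margY: "margY Ptxy = margY Pxy"
    and Elog: "Elog Pxy ?w \<le> Elog Ptxy ?w"
    unfolding Kc_def by auto
  have prodY: "prodY Q Ptxy = prodY Q Pxy"
    using margY unfolding prodY_def by simp
  have nonneg: "\<And>x. 0 \<le> Q x" "\<And>x y. 0 \<le> W x y" "\<And>u. 0 \<le> Pxy u" "\<And>u. 0 \<le> Ptxy u"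
    using assms(1-3) \<open>is_dist Ptxy\<close> by (simp_all add: is_dist_nonneg)
  have "KL Ptxy (joint Q W) + KL Pxy (prodY Q Pxy) = ?K + - Elog Ptxy ?w"
    using KL_joint_eq[of Ptxy Q W, OF nonneg(4,1,2)] margY prodY by (simp add: minus_ereal_def ac_simps)
  also have "\<dots> \<le> ?K + - Elog Pxy ?w"
    using Elog by (intro add_left_mono) simp
  also have "\<dots> = KL Pxy (joint Q W) + KL Ptxy (prodY Q Pxy)"
    using KL_joint_eq[of Pxy Q W, OF nonneg(3,1,2)] by (simp add: minus_ereal_def ac_simps)
  finally show ?thesis .
qed

lemma ereal_add_tradeoff:
  fixes a a' b b' k k' :: ereal and h h' :: real
  assumes a: "a' + ereal h' \<le> a + ereal h" and b: "b' + k \<le> b + k'"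
    and "a' \<noteq> -\<infinity>" "b' \<noteq> -\<infinity>" "k \<noteq> -\<infinity>"
  shows "a' + b' + (k - ereal h) \<le> a + b + (k' - ereal h')"
proof (cases "a + b + (k' - ereal h') = \<infinity>")
  case False
  then have "a \<noteq> \<infinity>" "b \<noteq> \<infinity>" "k' \<noteq> \<infinity>"
    by auto
  with assms obtain ra rb rk' where "a = ereal ra" "b = ereal rb" "k' = ereal rk'"
    by (cases a; cases b; cases k') auto
  with assms obtain ra' rb' rk where "a' = ereal ra'" "b' = ereal rb'" "k = ereal rk"
    by (cases a'; cases b'; cases k) auto
  with a b show ?thesis
    by (simp add: \<open>a = _\<close> \<open>b = _\<close> \<open>k' = _\<close>)
next
  case True
  then show ?thesis by (simp only:) simp
qed

lemma le_add_INF_ereal: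
  fixes c R :: ereal
  assumes "c \<noteq> -\<infinity>" and "\<And>i. i \<in> I \<Longrightarrow> R \<le> c + f i"
  shows "R \<le> c + (INF i\<in>I. f i)"
proof (cases "c = \<infinity>")
  case False
  with assms(1) have c: "\<bar>c\<bar> \<noteq> \<infinity>" by auto
  have "R - c \<le> f i" if "i \<in> I" for i
    using assms(2)[OF that] c by (simp add: ereal_minus_le add.commute)
  then have "R - c \<le> (INF i\<in>I. f i)"
    by (rule INF_greatest)
  with c show ?thesis by (simp add: ereal_minus_le add.commute)
qed simp

lemma pos_part_mono: "x \<le> y \<Longrightarrow> pos_part x \<le> pos_part y"
  unfolding pos_part_def by (rule max.mono) simp_all

lemma pos_part_INF: "pos_part (INF i\<in>I. f i) = (INF i\<in>I. pos_part (f i))"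
  unfolding pos_part_def sup_max[symmetric] by (rule sup_INF)

lemma Ks_Kc_objective_le:
  assumes "is_dist PU" and "is_dist Q" and "\<forall>x. is_dist (W x)"
    and "is_dist Ph" and "is_dist Pxy" and "Pt \<in> Ks PU Ph" and "Ptxy \<in> Kc W Pxy"
  shows "min (KL Ph PU + KL Pxy (joint Q W) + pos_part (KL Pxy (prodY Q Pxy) - ereal (condH Ph)))
             (KL Pt PU + KL Ptxy (joint Q W) + pos_part (KL Ptxy (prodY Q Ptxy) - ereal (condH Pt)))
         \<le> KL Ph PU + KL Pxy (joint Q W) + pos_part (KL Ptxy (prodY Q Pxy) - ereal (condH Pt))"
    (is "min (?A\<^sub>h + pos_part ?g\<^sub>h) (?A\<^sub>t + pos_part ?g\<^sub>t') \<le> ?A\<^sub>h + pos_part ?g\<^sub>t")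
proof -
  have "margY Ptxy = margY Pxy"
    using assms(7) unfolding Kc_def by auto
  then have g: "?g\<^sub>t' = ?g\<^sub>t"
    unfolding prodY_def by simp
  have "?A\<^sub>t + ?g\<^sub>h \<le> ?A\<^sub>h + ?g\<^sub>t"
    using Ks_KL_plus_condH_le[OF assms(1,4,6)] Kc_KL_joint_le[OF assms(2,3,5,7)]
    by (rule ereal_add_tradeoff) (simp_all add: KL_neq_minfty)
  show ?thesis
  proof (cases "?g\<^sub>h \<le> ?g\<^sub>t")
    case True
    then show ?thesis
      by (intro min.coboundedI1 add_left_mono pos_part_mono)
  next
    case False
    have g_fin: "?g\<^sub>t \<noteq> \<infinity>" "?g\<^sub>t \<noteq> -\<infinity>"
      using False KL_neq_minfty[of Ptxy "prodY Q Pxy"] by (auto simp: minus_ereal_def)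
    have "?A\<^sub>t + ?g\<^sub>t \<le> ?A\<^sub>t + ?g\<^sub>h"
      using False by (intro add_left_mono) simp
    also note \<open>?A\<^sub>t + ?g\<^sub>h \<le> ?A\<^sub>h + ?g\<^sub>t\<close>
    finally have "?A\<^sub>t \<le> ?A\<^sub>h"
      using g_fin by (simp add: ereal_add_le_add_iff2)
    then show ?thesis
      unfolding g by (intro min.coboundedI2 add_right_mono)
  qed
qed

theorem lemma4:
  fixes PU :: "'t::finite \<times> 'z::finite \<Rightarrow> real"
    and Q :: "'x::finite \<Rightarrow> real"
    and W :: "'x \<Rightarrow> 'y::finite \<Rightarrow> real"
  assumes "is_dist PU" and "is_dist Q" and "\<forall>x. is_dist (W x)"
  shows "(INF Ph\<in>{P. is_dist P}. INF Pxy\<in>{P. is_dist P}.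
            KL Ph PU + KL Pxy (joint Q W) +
            pos_part (INF Pt\<in>Ks PU Ph. INF Ptxy\<in>Kc W Pxy.
                        KL Ptxy (prodY Q Pxy) - ereal (condH Pt)))
       \<ge> (INF Ph\<in>{P. is_dist P}. INF Pxy\<in>{P. is_dist P}.
            KL Ph PU + KL Pxy (joint Q W) +
            pos_part (KL Pxy (prodY Q Pxy) - ereal (condH Ph)))"
proof -
  let ?F = "\<lambda>Ph Pxy. KL Ph PU + KL Pxy (joint Q W) + pos_part (KL Pxy (prodY Q Pxy) - ereal (condH Ph))"
  let ?R = "INF Ph\<in>{P. is_dist P}. INF Pxy\<in>{P. is_dist P}. ?F Ph Pxy"
  have R_le: "?R \<le> ?F Ph Pxy" if "is_dist Ph" "is_dist Pxy" for Ph Pxy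
    using that by (auto intro: INF_lower2)
  have "?R \<le> KL Ph PU + KL Pxy (joint Q W) + pos_part (KL Ptxy (prodY Q Pxy) - ereal (condH Pt))"
    if "is_dist Ph" "is_dist Pxy" "Pt \<in> Ks PU Ph" "Ptxy \<in> Kc W Pxy" for Ph Pxy Pt Ptxy
  proof -
    have "is_dist Pt" "is_dist Ptxy"
      using that(3,4) unfolding Ks_def Kc_def by auto
    then have "?R \<le> min (?F Ph Pxy) (?F Pt Ptxy)"
      using R_le that(1,2) by simp
    also have "\<dots> \<le> KL Ph PU + KL Pxy (joint Q W) + pos_part (KL Ptxy (prodY Q Pxy) - ereal (condH Pt))"
      by (rule Ks_Kc_objective_le[OF assms that])
    finally show ?thesis .
  qed
  then show ?thesis
    unfolding pos_part_INF
    by (intro INF_greatest le_add_INF_ereal) (auto simp: KL_neq_minfty)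
qed

end
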